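(* Let $K\ge1$, let $\Pi_1,\dots,\Pi_K$ be arbitrary probability distributions on $\mathcal{X}^1\times\mathcal{Y}$, let $(q_1,\dots,q_K)$ be a probability vector, let $\alpha\in(0,1)$, and let $n_1,\dots,n_K\ge0$ be fixed integers with $n=\sum_k n_k$. Suppose calibration data $(X_1,Y_1),\dots,(X_n,Y_n)$ are generated independently with, for each $k$ and each $i\in\{n_1+\dots+n_{k-1}+1,\dots,n_1+\dots+n_k\}$, $X_i^0=k$ and $(X_i^1,Y_i)\sim\Pi_k$, and the test point $(X_{n+1},Y_{n+1})$ is drawn independently with $\mathbb{P}\{X^0_{n+1}=k\}=q_k$ and $(X^1_{n+1},Y_{n+1})\mid X^0_{n+1}=k\sim\Pi_k$. Let $s:\mathcal{X}\times\mathcal{Y}\to\mathbb{R}$ be any fixed measurable score function and let $\widehat{C}_n$ be the corrected GWCP prediction set defined in the context. Then $\mathbb{P}\{Y_{n+1}\in\widehat{C}_n(X_{n+1})\}\ge1-\alpha$.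
   Context: Features are $x=(x^0,x^1)\in[K]\times\mathcal{X}^1$ with $x^0$ the group label. For a probability distribution $\mu$ on $\mathbb{R}\cup\{+\infty\}$ and $\tau\in(0,1]$, $\textnormal{Quantile}_{\tau}(\mu)=\inf\{t\in\mathbb{R}\cup\{+\infty\}:\mu([-\infty,t])\ge\tau\}$, and $\textnormal{Quantile}_{\tau}(\mu)=+\infty$ for $\tau>1$; $\delta_s$ is the point mass at $s$. With $s_i=s(X_i,Y_i)$, $\widehat{P}^{(k)}_{\textnormal{score}}=\frac{1}{n_k}\sum_{i\le n:\,X_i^0=k}\delta_{s_i}$ if $n_k>0$ and $\widehat{P}^{(k)}_{\textnormal{score}}=\delta_{+\infty}$ if $n_k=0$. Set $\alpha_k=\alpha-q_k/n_k$ if $n_k>0$ and $\alpha_k=\alpha$ if $n_k=0$, and $\widehat{q}_k=\textnormal{Quantile}_{1-\alpha_k}\big(\sum_{j=1}^K q_j\widehat{P}^{(j)}_{\textnormal{score}}\big)$ (interpreted as $+\infty$ if $\alpha_k<0$). The corrected GWCP set is $\widehat{C}_n(x)=\{y\in\mathcal{Y}: s(x,y)\le\widehat{q}_k\}$ for any $x$ with $x^0=k$. *)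

theory Defs
  imports "HOL-Probability.Probability"
begin

text \<open>Group-indexed data: a data point is ((x0, x1), y) with group label x0 :: nat in {1..K}.
  Calibration data is a function D :: nat => ((nat * 'x) * 'y), used at indices 1..n.\<close>

text \<open>CDF (mass of [-infinity, t]) of the empirical score distribution of a group with index set I,
  which is the point mass at +infinity when the group is empty.\<close>
definition emp_cdf :: "nat set \<Rightarrow> (nat \<Rightarrow> real) \<Rightarrow> ereal \<Rightarrow> real" where
  "emp_cdf I sc t =
     (if card I = 0 then (if t = \<infinity> then 1 else 0)
      else real (card {i\<in>I. ereal (sc i) \<le> t}) / real (card I))"

text \<open>Quantile of a distribution on the extended reals given through its CDF F(t) = mu([-inf,t]):
  inf over t in R \<union> {+inf} with F t \<ge> tau, and +inf for tau > 1.\<close>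
definition Quantile_cdf :: "real \<Rightarrow> (ereal \<Rightarrow> real) \<Rightarrow> ereal" where
  "Quantile_cdf \<tau> F = (if \<tau> > 1 then \<infinity> else Inf {t. t \<noteq> -\<infinity> \<and> F t \<ge> \<tau>})"

definition gwcp_group :: "nat \<Rightarrow> (nat \<Rightarrow> (nat \<times> 'x) \<times> 'y) \<Rightarrow> nat \<Rightarrow> nat set" where
  "gwcp_group n D j = {i\<in>{1..n}. fst (fst (D i)) = j}"

definition gwcp_qhat ::
  "nat \<Rightarrow> (nat \<Rightarrow> real) \<Rightarrow> real \<Rightarrow> ((nat \<times> 'x) \<times> 'y \<Rightarrow> real) \<Rightarrow> nat
     \<Rightarrow> (nat \<Rightarrow> (nat \<times> 'x) \<times> 'y) \<Rightarrow> nat \<Rightarrow> ereal" where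
  "gwcp_qhat K q \<alpha> s n D k =
     (let nk = card (gwcp_group n D k);
          \<alpha>k = (if nk > 0 then \<alpha> - q k / real nk else \<alpha>)
      in if \<alpha>k < 0 then \<infinity>
         else Quantile_cdf (1 - \<alpha>k)
                (\<lambda>t. \<Sum>j=1..K. q j * emp_cdf (gwcp_group n D j) (\<lambda>i. s (D i)) t))"

definition gwcp_set ::
  "nat \<Rightarrow> (nat \<Rightarrow> real) \<Rightarrow> real \<Rightarrow> ((nat \<times> 'x) \<times> 'y \<Rightarrow> real) \<Rightarrow> nat
     \<Rightarrow> (nat \<Rightarrow> (nat \<times> 'x) \<times> 'y) \<Rightarrow> nat \<times> 'x \<Rightarrow> 'y set" where
  "gwcp_set K q \<alpha> s n D x = {y. ereal (s (x, y)) \<le> gwcp_qhat K q \<alpha> s n D (fst x)}"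

end

(* A test point of group k is missed iff its score t exceeds qhat_k, which (for alpha_k >= 0)
   happens iff the mixture tail T(t) = sum_j q_j * (fraction of group-j calibration scores >= t),
   an empty group counting as a point mass at +infinity, is at most alpha_k = alpha - q_k / n_k.
   If the missed test point replaces a calibration point i of group k, only one of the n_k
   scores of that group changes, so T rises by at most q_k / n_k and the new point has tail at
   most alpha.  Given label k, the test point has the law of a group-k calibration point, and
   both are independent of the remaining calibration data; hence
   P(miss, label k) <= q_k / n_k * sum_i P(calibration point i of group k has tail <= alpha).
   A miss with an empty test group forces the q-mass of the empty groups to be at most alpha.
   Finally, a counting argument at the smallest calibration score with tail <= alpha shows that
   the q-weighted fraction of calibration points with tail <= alpha, plus that mass, is at most
   alpha. *)

theory Submission
  imports Defs
begin

section \<open>Empirical tails and the corrected threshold\<close>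

abbreviation label :: "(nat \<times> 'x) \<times> 'y \<Rightarrow> nat" where
  "label z \<equiv> fst (fst z)"

text \<open>The mass of [t, +\<infinity>] under the empirical distribution of emp_cdf, which is the point mass
  at +\<infinity> for an empty group.\<close>
definition emp_tail :: "nat set \<Rightarrow> (nat \<Rightarrow> real) \<Rightarrow> real \<Rightarrow> real" where
  "emp_tail I sc t = (if card I = 0 then 1 else real (card {i\<in>I. t \<le> sc i}) / real (card I))"

definition mix_cdf ::
  "nat \<Rightarrow> (nat \<Rightarrow> real) \<Rightarrow> ((nat \<times> 'x) \<times> 'y \<Rightarrow> real) \<Rightarrow> nat
     \<Rightarrow> (nat \<Rightarrow> (nat \<times> 'x) \<times> 'y) \<Rightarrow> ereal \<Rightarrow> real" where
  "mix_cdf K q s n D t = (\<Sum>j=1..K. q j * emp_cdf (gwcp_group n D j) (\<lambda>i. s (D i)) t)"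

definition mix_tail ::
  "nat \<Rightarrow> (nat \<Rightarrow> real) \<Rightarrow> ((nat \<times> 'x) \<times> 'y \<Rightarrow> real) \<Rightarrow> nat
     \<Rightarrow> (nat \<Rightarrow> (nat \<times> 'x) \<times> 'y) \<Rightarrow> real \<Rightarrow> real" where
  "mix_tail K q s n D t = (\<Sum>j=1..K. q j * emp_tail (gwcp_group n D j) (\<lambda>i. s (D i)) t)"

definition gwcp_level :: "(nat \<Rightarrow> real) \<Rightarrow> real \<Rightarrow> nat \<Rightarrow> (nat \<Rightarrow> (nat \<times> 'x) \<times> 'y) \<Rightarrow> nat \<Rightarrow> real" where
  "gwcp_level q \<alpha> n D k =
     (if card (gwcp_group n D k) > 0 then \<alpha> - q k / real (card (gwcp_group n D k)) else \<alpha>)"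

definition empty_group_mass :: "nat \<Rightarrow> (nat \<Rightarrow> real) \<Rightarrow> nat \<Rightarrow> (nat \<Rightarrow> (nat \<times> 'x) \<times> 'y) \<Rightarrow> real" where
  "empty_group_mass K q n D = (\<Sum>j\<in>{j\<in>{1..K}. card (gwcp_group n D j) = 0}. q j)"

lemma finite_gwcp_group [simp]: "finite (gwcp_group n D j)"
  unfolding gwcp_group_def by auto

lemma gwcp_group_subset: "gwcp_group n D j \<subseteq> {1..n}"
  unfolding gwcp_group_def by auto

lemma gwcp_group_cong: "(\<And>l. l \<in> {1..n} \<Longrightarrow> D l = D' l) \<Longrightarrow> gwcp_group n D j = gwcp_group n D' j"
  unfolding gwcp_group_def by auto

lemma gwcp_group_fun_upd:
  "i \<in> gwcp_group n D k \<Longrightarrow> label z = k \<Longrightarrow> gwcp_group n (D(i := z)) j = gwcp_group n D j"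
  unfolding gwcp_group_def by auto

lemma emp_tail_nonneg: "0 \<le> emp_tail I sc t"
  unfolding emp_tail_def by auto

lemma emp_tail_antimono:
  assumes "t \<le> t'"
  shows "emp_tail I sc t' \<le> emp_tail I sc t"
proof (cases "card I = 0")
  case False
  then have "card {i\<in>I. t' \<le> sc i} \<le> card {i\<in>I. t \<le> sc i}"
    using assms by (intro card_mono) (auto simp: card_eq_0_iff)
  with False show ?thesis
    unfolding emp_tail_def by (simp add: divide_right_mono)
qed (simp add: emp_tail_def)

lemma emp_cdf_add_emp_tail_le:
  assumes "u < ereal t"
  shows "emp_cdf I sc u + emp_tail I sc t \<le> 1"
proof (cases "card I = 0")
  case True
  with assms show ?thesis by (auto simp: emp_cdf_def emp_tail_def)
next
  case False
  then have "finite I" by (meson card.infinite)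
  have "{i\<in>I. ereal (sc i) \<le> u} \<inter> {i\<in>I. t \<le> sc i} = {}"
    using assms by auto (metis ereal_less_eq(3) leD order_trans)
  with \<open>finite I\<close> have "card {i\<in>I. ereal (sc i) \<le> u} + card {i\<in>I. t \<le> sc i}
      = card ({i\<in>I. ereal (sc i) \<le> u} \<union> {i\<in>I. t \<le> sc i})"
    by (intro card_Un_disjoint[symmetric]) auto
  also have "\<dots> \<le> card I"
    using \<open>finite I\<close> by (intro card_mono) auto
  finally show ?thesis
    using False by (simp add: emp_cdf_def emp_tail_def add_divide_distrib[symmetric] divide_le_eq_1
        flip: of_nat_add)
qed

lemma emp_cdf_add_emp_tail_eq:
  assumes "\<And>l. l \<in> I \<Longrightarrow> sc l \<le> u \<longleftrightarrow> sc l < t"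
  shows "emp_cdf I sc (ereal u) + emp_tail I sc t = 1"
proof (cases "card I = 0")
  case True
  then show ?thesis by (simp add: emp_cdf_def emp_tail_def)
next
  case False
  then have "finite I" by (meson card.infinite)
  have "{i\<in>I. ereal (sc i) \<le> ereal u} = I - {i\<in>I. t \<le> sc i}"
    using assms by (auto simp: not_le)
  with \<open>finite I\<close> have "card {i\<in>I. ereal (sc i) \<le> ereal u} + card {i\<in>I. t \<le> sc i} = card I"
    by (simp add: card_Diff_subset card_mono)
  then show ?thesis
    using False by (simp add: emp_cdf_def emp_tail_def add_divide_distrib[symmetric] flip: of_nat_add)
qed

lemma emp_tail_fun_upd_le:
  assumes "i \<in> I" "finite I"
  shows "emp_tail I (sc(i := v)) t \<le> emp_tail I sc t + 1 / real (card I)"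
proof -
  have "card {l\<in>I. t \<le> (sc(i := v)) l} \<le> card (insert i {l\<in>I. t \<le> sc l})"
    using assms by (intro card_mono) auto
  also have "\<dots> \<le> card {l\<in>I. t \<le> sc l} + 1"
    using assms by (simp add: card_insert_if)
  finally have "card {l\<in>I. t \<le> (sc(i := v)) l} \<le> card {l\<in>I. t \<le> sc l} + 1" .
  moreover have "card I > 0" using assms by (auto simp: card_gt_0_iff)
  ultimately show ?thesis
    unfolding emp_tail_def by (simp add: add_divide_distrib[symmetric] divide_right_mono)
qed

lemma mix_cdf_add_mix_tail_le:
  assumes "\<And>j. j \<in> {1..K} \<Longrightarrow> 0 \<le> q j" "(\<Sum>j=1..K. q j) = 1" "u < ereal t"
  shows "mix_cdf K q s n D u + mix_tail K q s n D t \<le> 1"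
proof -
  have "mix_cdf K q s n D u + mix_tail K q s n D t
      = (\<Sum>j=1..K. q j * (emp_cdf (gwcp_group n D j) (\<lambda>i. s (D i)) u
                          + emp_tail (gwcp_group n D j) (\<lambda>i. s (D i)) t))"
    by (simp add: mix_cdf_def mix_tail_def sum.distrib distrib_left)
  also have "\<dots> \<le> (\<Sum>j=1..K. q j * 1)"
    using assms emp_cdf_add_emp_tail_le by (intro sum_mono mult_left_mono) auto
  finally show ?thesis using assms(2) by simp
qed

lemma mix_cdf_add_mix_tail_eq:
  assumes "(\<Sum>j=1..K. q j) = 1" "\<And>l. l \<in> {1..n} \<Longrightarrow> s (D l) \<le> u \<longleftrightarrow> s (D l) < t"
  shows "mix_cdf K q s n D (ereal u) + mix_tail K q s n D t = 1"
proof -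
  have "mix_cdf K q s n D (ereal u) + mix_tail K q s n D t
      = (\<Sum>j=1..K. q j * (emp_cdf (gwcp_group n D j) (\<lambda>i. s (D i)) (ereal u)
                          + emp_tail (gwcp_group n D j) (\<lambda>i. s (D i)) t))"
    by (simp add: mix_cdf_def mix_tail_def sum.distrib distrib_left)
  also have "\<dots> = (\<Sum>j=1..K. q j * 1)"
  proof (intro sum.cong refl arg_cong[where f="(*) (q _)"] emp_cdf_add_emp_tail_eq)
    show "s (D l) \<le> u \<longleftrightarrow> s (D l) < t" if "l \<in> gwcp_group n D j" for j l
      using that gwcp_group_subset assms(2) by blast
  qed
  finally show ?thesis using assms(1) by simp
qed

lemma gwcp_qhat_eq:
  "gwcp_qhat K q \<alpha> s n D k = (if gwcp_level q \<alpha> n D k < 0 then \<infinity>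
     else Inf {u. u \<noteq> -\<infinity> \<and> 1 - gwcp_level q \<alpha> n D k \<le> mix_cdf K q s n D u})"
  by (simp add: gwcp_qhat_def gwcp_level_def Quantile_cdf_def mix_cdf_def Let_def)

lemma gwcp_qhat_less_iff:
  assumes "\<And>j. j \<in> {1..K} \<Longrightarrow> 0 \<le> q j" "(\<Sum>j=1..K. q j) = 1"
  shows "gwcp_qhat K q \<alpha> s n D k < ereal t \<longleftrightarrow>
    0 \<le> gwcp_level q \<alpha> n D k \<and> mix_tail K q s n D t \<le> gwcp_level q \<alpha> n D k"
    (is "_ \<longleftrightarrow> 0 \<le> ?a \<and> _")
proof (cases "?a < 0")
  case False
  let ?S = "{u. u \<noteq> -\<infinity> \<and> 1 - ?a \<le> mix_cdf K q s n D u}"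
  have "Inf ?S < ereal t \<longleftrightarrow> mix_tail K q s n D t \<le> ?a"
  proof
    assume "Inf ?S < ereal t"
    then obtain u where "u \<in> ?S" "u < ereal t" by (auto simp: Inf_less_iff)
    then show "mix_tail K q s n D t \<le> ?a"
      using mix_cdf_add_mix_tail_le[OF assms, of u t s n D] by simp
  next
    assume tail: "mix_tail K q s n D t \<le> ?a"
    define U where "U = insert (t - 1) {s (D l) |l. l \<in> {1..n} \<and> s (D l) < t}"
    define u where "u = Max U"
    have "finite U" unfolding U_def by auto
    then have "u < t" unfolding u_def by (subst Max_less_iff) (auto simp: U_def)
    moreover have "s (D l) \<le> u" if "l \<in> {1..n}" "s (D l) < t" for l
      unfolding u_def using \<open>finite U\<close> that by (intro Max_ge) (auto simp: U_def)
    ultimately have "s (D l) \<le> u \<longleftrightarrow> s (D l) < t" if "l \<in> {1..n}" for l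
      using that by fastforce
    then have "mix_cdf K q s n D (ereal u) + mix_tail K q s n D t = 1"
      by (rule mix_cdf_add_mix_tail_eq[OF assms(2)])
    with tail have "ereal u \<in> ?S" by simp
    then have "Inf ?S \<le> ereal u" by (rule Inf_lower)
    also have "\<dots> < ereal t" using \<open>u < t\<close> by simp
    finally show "Inf ?S < ereal t" .
  qed
  with False show ?thesis by (simp add: gwcp_qhat_eq)
qed (simp add: gwcp_qhat_eq)

lemma mix_tail_cong:
  assumes "\<And>l. l \<in> {1..n} \<Longrightarrow> D l = D' l"
  shows "mix_tail K q s n D t = mix_tail K q s n D' t"
proof -
  have groups: "gwcp_group n D = gwcp_group n D'"
    using gwcp_group_cong[of n D D', OF assms] by blast
  have scores: "{i \<in> gwcp_group n D' j. t \<le> s (D i)} = {i \<in> gwcp_group n D' j. t \<le> s (D' i)}" for j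
    using assms gwcp_group_subset[of n D' j] by force
  show ?thesis
    unfolding mix_tail_def emp_tail_def groups scores ..
qed

lemma mix_tail_antimono:
  "(\<And>j. j \<in> {1..K} \<Longrightarrow> 0 \<le> q j) \<Longrightarrow> t \<le> t' \<Longrightarrow> mix_tail K q s n D t' \<le> mix_tail K q s n D t"
  unfolding mix_tail_def by (intro sum_mono mult_left_mono emp_tail_antimono) auto

lemma empty_group_mass_le_mix_tail:
  assumes "\<And>j. j \<in> {1..K} \<Longrightarrow> 0 \<le> q j"
  shows "empty_group_mass K q n D \<le> mix_tail K q s n D t"
proof -
  have "empty_group_mass K q n D = (\<Sum>j=1..K. if card (gwcp_group n D j) = 0 then q j else 0)"
    unfolding empty_group_mass_def by (simp add: sum.If_cases Int_def)
  also have "\<dots> \<le> mix_tail K q s n D t"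
    unfolding mix_tail_def using assms emp_tail_nonneg by (intro sum_mono) (auto simp: emp_tail_def)
  finally show ?thesis .
qed

text \<open>Only one of the n k scores of group k changes, and each of them carries mixture weight
  q k / n k.\<close>
lemma mix_tail_fun_upd_le:
  assumes "k \<in> {1..K}" "\<And>j. j \<in> {1..K} \<Longrightarrow> 0 \<le> q j"
    and "label z = k" "i \<in> gwcp_group n D k"
    and "mix_tail K q s n D (s z) \<le> gwcp_level q \<alpha> n D k"
  shows "mix_tail K q s n (D(i := z)) (s z) \<le> \<alpha>"
proof -
  let ?G = "gwcp_group n D" and ?sc = "\<lambda>l. s (D l)"
  have groups: "gwcp_group n (D(i := z)) = ?G"
    using gwcp_group_fun_upd[OF assms(4,3)] by blast
  have scores: "(\<lambda>l. s ((D(i := z)) l)) = ?sc(i := s z)" by auto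
  have "card (?G k) > 0" using assms(4) by (auto simp: card_gt_0_iff)
  then have level: "gwcp_level q \<alpha> n D k = \<alpha> - q k / real (card (?G k))"
    by (simp add: gwcp_level_def)
  have "q j * emp_tail (?G j) (?sc(i := s z)) (s z)
      \<le> q j * emp_tail (?G j) ?sc (s z) + (if j = k then q k / real (card (?G k)) else 0)"
    if "j \<in> {1..K}" for j
  proof (cases "j = k")
    case True
    have "q k * emp_tail (?G k) (?sc(i := s z)) (s z) \<le> q k * (emp_tail (?G k) ?sc (s z) + 1 / real (card (?G k)))"
      using assms(1,2,4) by (intro mult_left_mono emp_tail_fun_upd_le) auto
    with True show ?thesis by (simp add: distrib_left)
  next
    case False
    then have "i \<notin> ?G j" using assms(4) by (auto simp: gwcp_group_def)
    then have "{l \<in> ?G j. s z \<le> (?sc(i := s z)) l} = {l \<in> ?G j. s z \<le> ?sc l}" by auto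
    with False show ?thesis by (simp add: emp_tail_def)
  qed
  then have "mix_tail K q s n (D(i := z)) (s z)
      \<le> (\<Sum>j=1..K. q j * emp_tail (?G j) ?sc (s z) + (if j = k then q k / real (card (?G k)) else 0))"
    unfolding mix_tail_def groups scores by (intro sum_mono) auto
  also have "\<dots> = mix_tail K q s n D (s z) + q k / real (card (?G k))"
    using assms(1) by (simp add: sum.distrib mix_tail_def)
  finally show ?thesis using assms(5) level by simp
qed

lemma mix_tail_eq_sum_card_ge:
  "mix_tail K q s n D t =
     (\<Sum>j\<in>{j\<in>{1..K}. card (gwcp_group n D j) > 0}. q j / real (card (gwcp_group n D j))
        * real (card {i\<in>gwcp_group n D j. t \<le> s (D i)}))
     + empty_group_mass K q n D"
proof -
  let ?G = "gwcp_group n D" and ?sc = "\<lambda>i. s (D i)"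
  let ?P = "{j\<in>{1..K}. card (?G j) > 0}" and ?E = "{j\<in>{1..K}. card (?G j) = 0}"
  have "mix_tail K q s n D t = (\<Sum>j\<in>?P \<union> ?E. q j * emp_tail (?G j) ?sc t)"
    unfolding mix_tail_def by (intro sum.cong) (auto simp: card_gt_0_iff)
  also have "\<dots> = (\<Sum>j\<in>?P. q j * emp_tail (?G j) ?sc t) + (\<Sum>j\<in>?E. q j * emp_tail (?G j) ?sc t)"
    by (intro sum.union_disjoint) auto
  also have "(\<Sum>j\<in>?P. q j * emp_tail (?G j) ?sc t)
      = (\<Sum>j\<in>?P. q j / real (card (?G j)) * real (card {i\<in>?G j. t \<le> s (D i)}))"
    by (intro sum.cong refl) (auto simp: emp_tail_def)
  also have "(\<Sum>j\<in>?E. q j * emp_tail (?G j) ?sc t) = empty_group_mass K q n D"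
    unfolding empty_group_mass_def by (intro sum.cong) (auto simp: emp_tail_def)
  finally show ?thesis .
qed

lemma sum_card_small_mix_tail_le:
  assumes q: "\<And>j. j \<in> {1..K} \<Longrightarrow> 0 \<le> q j" and "0 \<le> \<alpha>"
  shows "(\<Sum>j\<in>{j\<in>{1..K}. card (gwcp_group n D j) > 0}. q j / real (card (gwcp_group n D j))
            * real (card {i\<in>gwcp_group n D j. mix_tail K q s n D (s (D i)) \<le> \<alpha>}))
         + (if empty_group_mass K q n D \<le> \<alpha> then empty_group_mass K q n D else 0) \<le> \<alpha>"
    (is "?lhs \<le> _")
proof -
  let ?G = "gwcp_group n D" and ?T = "mix_tail K q s n D" and ?e = "empty_group_mass K q n D"
  let ?P = "{j\<in>{1..K}. card (?G j) > 0}"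
  define A where "A = {i\<in>{1..n}. label (D i) \<in> {1..K} \<and> ?T (s (D i)) \<le> \<alpha>}"
  have "0 \<le> ?e" unfolding empty_group_mass_def using q by (intro sum_nonneg) auto
  show ?thesis
  proof (cases "A = {}")
    case True
    then have "{i\<in>?G j. ?T (s (D i)) \<le> \<alpha>} = {}" if "j \<in> {1..K}" for j
      using that unfolding A_def gwcp_group_def by auto
    then have "(\<Sum>j\<in>?P. q j / real (card (?G j)) * real (card {i\<in>?G j. ?T (s (D i)) \<le> \<alpha>})) = 0"
      by (intro sum.neutral) auto
    with \<open>0 \<le> \<alpha>\<close> show ?thesis by simp
  next
    case False
    have "finite A" unfolding A_def by auto
    \<comment> \<open>The smallest selected score m makes the selected points exactly those with score \<ge> m.\<close>
    define m where "m = Min ((\<lambda>i. s (D i)) ` A)"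
    have "m \<in> (\<lambda>i. s (D i)) ` A" unfolding m_def using \<open>finite A\<close> False by (intro Min_in) auto
    then have "?T m \<le> \<alpha>" unfolding A_def by auto
    have selected: "{i\<in>?G j. ?T (s (D i)) \<le> \<alpha>} = {i\<in>?G j. m \<le> s (D i)}" if "j \<in> {1..K}" for j
    proof safe
      fix i assume "i \<in> ?G j" "?T (s (D i)) \<le> \<alpha>"
      with that have "i \<in> A" unfolding A_def gwcp_group_def by auto
      with \<open>finite A\<close> show "m \<le> s (D i)" unfolding m_def by (intro Min_le) auto
    next
      fix i assume "m \<le> s (D i)"
      then show "?T (s (D i)) \<le> \<alpha>"
        using mix_tail_antimono[of K q, OF q] \<open>?T m \<le> \<alpha>\<close> by (meson order_trans)
    qed
    have "?lhs \<le> (\<Sum>j\<in>?P. q j / real (card (?G j)) * real (card {i\<in>?G j. ?T (s (D i)) \<le> \<alpha>})) + ?e"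
      using \<open>0 \<le> ?e\<close> by auto
    also have "\<dots> = (\<Sum>j\<in>?P. q j / real (card (?G j)) * real (card {i\<in>?G j. m \<le> s (D i)})) + ?e"
      using selected by (intro arg_cong2[where f="(+)"] sum.cong refl) auto
    also have "\<dots> = ?T m"
      by (rule mix_tail_eq_sum_card_ge[symmetric])
    finally show ?thesis using \<open>?T m \<le> \<alpha>\<close> by linarith
  qed
qed

lemma borel_measurable_card_Collect:
  assumes "finite I" "\<And>i. i \<in> I \<Longrightarrow> Measurable.pred \<Omega> (P i)"
  shows "(\<lambda>\<omega>. real (card {i\<in>I. P i \<omega>})) \<in> borel_measurable \<Omega>"
proof -
  have "real (card {i\<in>I. P i \<omega>}) = (\<Sum>i\<in>I. if P i \<omega> then 1 else 0)" for \<omega>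
    using assms(1) by (simp add: sum.inter_filter[symmetric])
  moreover have "(\<lambda>\<omega>. \<Sum>i\<in>I. if P i \<omega> then 1 else 0 :: real) \<in> borel_measurable \<Omega>"
  proof (rule borel_measurable_sum)
    fix i assume "i \<in> I"
    note assms(2)[OF this, measurable]
    show "(\<lambda>\<omega>. if P i \<omega> then 1 else 0 :: real) \<in> borel_measurable \<Omega>" by measurable
  qed
  ultimately show ?thesis by simp
qed

lemma borel_measurable_mix_tail:
  fixes D :: "'o \<Rightarrow> nat \<Rightarrow> (nat \<times> 'x) \<times> 'y"
  assumes D: "\<And>l. l \<in> {1..n} \<Longrightarrow> (\<lambda>\<omega>. D \<omega> l) \<in> \<Omega> \<rightarrow>\<^sub>M (count_space UNIV \<Otimes>\<^sub>M MX) \<Otimes>\<^sub>M MY"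
    and s: "s \<in> borel_measurable ((count_space UNIV \<Otimes>\<^sub>M MX) \<Otimes>\<^sub>M MY)"
    and t: "t \<in> borel_measurable \<Omega>"
  shows "(\<lambda>\<omega>. mix_tail K q s n (D \<omega>) (t \<omega>)) \<in> borel_measurable \<Omega>"
proof -
  have pred: "Measurable.pred \<Omega> (\<lambda>\<omega>. label (D \<omega> l) = j)" if "l \<in> {1..n}" for l j
    using D[OF that] by measurable
  have pred_le: "Measurable.pred \<Omega> (\<lambda>\<omega>. label (D \<omega> l) = j \<and> t \<omega> \<le> s (D \<omega> l))"
    if "l \<in> {1..n}" for l j
    using D[OF that] s t by measurable
  have [measurable]: "(\<lambda>\<omega>. real (card (gwcp_group n (D \<omega>) j))) \<in> borel_measurable \<Omega>" for j
    unfolding gwcp_group_def by (intro borel_measurable_card_Collect finite_atLeastAtMost pred) auto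
  have "{i \<in> gwcp_group n (D \<omega>) j. t \<omega> \<le> s (D \<omega> i)}
      = {l\<in>{1..n}. label (D \<omega> l) = j \<and> t \<omega> \<le> s (D \<omega> l)}" for \<omega> j
    by (auto simp: gwcp_group_def)
  then have [measurable]:
    "(\<lambda>\<omega>. real (card {i \<in> gwcp_group n (D \<omega>) j. t \<omega> \<le> s (D \<omega> i)})) \<in> borel_measurable \<Omega>" for j
    by (simp only:) (intro borel_measurable_card_Collect finite_atLeastAtMost pred_le)
  show ?thesis
    unfolding mix_tail_def emp_tail_def of_nat_eq_0_iff[where 'a=real, symmetric] by measurable
qed

lemma borel_measurable_gwcp_level:
  fixes D :: "'o \<Rightarrow> nat \<Rightarrow> (nat \<times> 'x) \<times> 'y"
  assumes D: "\<And>l. l \<in> {1..n} \<Longrightarrow> (\<lambda>\<omega>. D \<omega> l) \<in> \<Omega> \<rightarrow>\<^sub>M (count_space UNIV \<Otimes>\<^sub>M MX) \<Otimes>\<^sub>M MY"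
  shows "(\<lambda>\<omega>. gwcp_level q \<alpha> n (D \<omega>) k) \<in> borel_measurable \<Omega>"
proof -
  have "Measurable.pred \<Omega> (\<lambda>\<omega>. label (D \<omega> l) = k)" if "l \<in> {1..n}" for l
    using D[OF that] by measurable
  then have [measurable]: "(\<lambda>\<omega>. real (card (gwcp_group n (D \<omega>) k))) \<in> borel_measurable \<Omega>"
    unfolding gwcp_group_def by (intro borel_measurable_card_Collect finite_atLeastAtMost) auto
  show ?thesis
    unfolding gwcp_level_def of_nat_0_less_iff[where 'a=real, symmetric] by measurable
qed

section \<open>Calibration blocks\<close>

definition block :: "(nat \<Rightarrow> nat) \<Rightarrow> nat \<Rightarrow> nat set" where
  "block nk k = {(\<Sum>j=1..<k. nk j) + 1 .. (\<Sum>j=1..k. nk j)}"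

lemma card_block:
  assumes "1 \<le> k"
  shows "card (block nk k) = nk k"
proof -
  have "{1..k} = {1..<Suc k}" by auto
  then have "(\<Sum>j=1..k. nk j) = (\<Sum>j=1..<k. nk j) + nk k"
    using assms by (simp add: sum.atLeastLessThan_Suc)
  then show ?thesis by (simp add: block_def)
qed

lemma block_subset:
  assumes "k \<in> {1..K}"
  shows "block nk k \<subseteq> {1..(\<Sum>j=1..K. nk j)}"
proof -
  have "(\<Sum>j=1..k. nk j) \<le> (\<Sum>j=1..K. nk j)" using assms by (intro sum_mono2) auto
  then show ?thesis by (auto simp: block_def)
qed

lemma ex_block:
  "i \<in> {1..(\<Sum>j=1..K. nk j)} \<Longrightarrow> \<exists>k\<in>{1..K}. i \<in> block nk k"
proof (induction K)
  case (Suc K)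
  show ?case
  proof (cases "i \<le> (\<Sum>j=1..K. nk j)")
    case True
    with Suc show ?thesis by force
  next
    case False
    have "{1..<Suc K} = {1..K}" by auto
    with False Suc.prems show ?thesis
      by (intro bexI[of _ "Suc K"]) (auto simp: block_def)
  qed
qed simp

lemma finite_block [simp]: "finite (block nk k)"
  by (simp add: block_def)

lemma gwcp_group_eq_block:
  assumes "n = (\<Sum>k=1..K. nk k)" "\<forall>k\<in>{1..K}. \<forall>i\<in>block nk k. label (D i) = k" "j \<in> {1..K}"
  shows "gwcp_group n D j = block nk j"
proof safe
  fix i assume "i \<in> gwcp_group n D j"
  then have "i \<in> {1..n}" "label (D i) = j" by (auto simp: gwcp_group_def)
  with assms(1) obtain k where "k \<in> {1..K}" "i \<in> block nk k" using ex_block by blast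
  with assms(2) \<open>label (D i) = j\<close> show "i \<in> block nk j" by auto
next
  fix i assume "i \<in> block nk j"
  moreover from this have "i \<in> {1..n}" using assms(1) block_subset[OF assms(3), of nk] by auto
  ultimately show "i \<in> gwcp_group n D j" using assms(2,3) by (auto simp: gwcp_group_def)
qed

section \<open>Independence and expectation\<close>

lemma (in prob_space) prob_pair_indep_var_scaled:
  assumes indep: "indep_var MV V N W" "indep_var MV V N W'" and "0 \<le> c"
    and G: "G \<in> sets (MV \<Otimes>\<^sub>M N)" "G \<subseteq> {p. P (snd p)}"
    and scaled: "\<And>B. B \<in> sets N \<Longrightarrow> B \<subseteq> {z. P z} \<Longrightarrow> prob (W -` B \<inter> space M) = c * prob (W' -` B \<inter> space M)"
  shows "prob ((\<lambda>\<omega>. (V \<omega>, W \<omega>)) -` G \<inter> space M) = c * prob ((\<lambda>\<omega>. (V \<omega>, W' \<omega>)) -` G \<inter> space M)"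
proof -
  have rv: "random_variable MV V" "random_variable N W" "random_variable N W'"
    using indep indep_var_rv1 indep_var_rv2 by auto
  interpret PW: prob_space "distr M N W" by (rule prob_space_distr) (rule rv(2))
  interpret PW': prob_space "distr M N W'" by (rule prob_space_distr) (rule rv(3))
  have joint: "distr M MV V \<Otimes>\<^sub>M distr M N W = distr M (MV \<Otimes>\<^sub>M N) (\<lambda>\<omega>. (V \<omega>, W \<omega>))"
    "distr M MV V \<Otimes>\<^sub>M distr M N W' = distr M (MV \<Otimes>\<^sub>M N) (\<lambda>\<omega>. (V \<omega>, W' \<omega>))"
    using indep indep_var_distribution_eq by blast+
  have pair_rv: "(\<lambda>\<omega>. (V \<omega>, W \<omega>)) \<in> M \<rightarrow>\<^sub>M MV \<Otimes>\<^sub>M N" "(\<lambda>\<omega>. (V \<omega>, W' \<omega>)) \<in> M \<rightarrow>\<^sub>M MV \<Otimes>\<^sub>M N"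
    using rv by measurable
  have sets_G: "G \<in> sets (distr M MV V \<Otimes>\<^sub>M distr M N W)" "G \<in> sets (distr M MV V \<Otimes>\<^sub>M distr M N W')"
    using G(1) sets_pair_measure_cong[OF sets_distr sets_distr] by simp_all
  have slice: "emeasure (distr M N W) (Pair v -` G) = ennreal c * emeasure (distr M N W') (Pair v -` G)" for v
  proof -
    define B where "B = Pair v -` G"
    have B: "B \<in> sets N" "B \<subseteq> {z. P z}" using sets_Pair1[OF G(1)] G(2) by (auto simp: B_def)
    have "emeasure (distr M N W) B = ennreal (c * prob (W' -` B \<inter> space M))"
      using emeasure_distr[OF rv(2) B(1)] scaled[OF B] by (simp add: emeasure_eq_measure)
    also have "\<dots> = ennreal c * emeasure (distr M N W') B"
      using emeasure_distr[OF rv(3) B(1)] \<open>0 \<le> c\<close> by (simp add: emeasure_eq_measure ennreal_mult)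
    finally show ?thesis unfolding B_def .
  qed
  have "emeasure M ((\<lambda>\<omega>. (V \<omega>, W \<omega>)) -` G \<inter> space M) = emeasure (distr M MV V \<Otimes>\<^sub>M distr M N W) G"
    using emeasure_distr[OF pair_rv(1) G(1)] joint(1) by simp
  also have "\<dots> = (\<integral>\<^sup>+ v. emeasure (distr M N W) (Pair v -` G) \<partial>distr M MV V)"
    using sets_G(1) by (rule PW.emeasure_pair_measure_alt)
  also have "\<dots> = ennreal c * (\<integral>\<^sup>+ v. emeasure (distr M N W') (Pair v -` G) \<partial>distr M MV V)"
    unfolding slice using sets_G(2) by (intro nn_integral_cmult PW'.measurable_emeasure_Pair)
  also have "(\<integral>\<^sup>+ v. emeasure (distr M N W') (Pair v -` G) \<partial>distr M MV V)
      = emeasure (distr M MV V \<Otimes>\<^sub>M distr M N W') G"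
    using sets_G(2) by (rule PW'.emeasure_pair_measure_alt[symmetric])
  also have "\<dots> = emeasure M ((\<lambda>\<omega>. (V \<omega>, W' \<omega>)) -` G \<inter> space M)"
    using emeasure_distr[OF pair_rv(2) G(1)] joint(2) by simp
  finally have "ennreal (prob ((\<lambda>\<omega>. (V \<omega>, W \<omega>)) -` G \<inter> space M))
      = ennreal (c * prob ((\<lambda>\<omega>. (V \<omega>, W' \<omega>)) -` G \<inter> space M))"
    using \<open>0 \<le> c\<close> by (simp add: emeasure_eq_measure ennreal_mult)
  then show ?thesis
    using \<open>0 \<le> c\<close> by (subst (asm) ennreal_inj) auto
qed

lemma (in prob_space) sum_prob_le_of_AE_count_le:
  assumes "finite I" "\<And>i. i \<in> I \<Longrightarrow> finite (J i)" "\<And>i j. i \<in> I \<Longrightarrow> j \<in> J i \<Longrightarrow> A i j \<in> events"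
    and "AE \<omega> in M. (\<Sum>i\<in>I. c i * real (card {j\<in>J i. \<omega> \<in> A i j})) \<le> b"
  shows "(\<Sum>i\<in>I. c i * (\<Sum>j\<in>J i. prob (A i j))) \<le> b"
proof -
  define count where "count i = (\<lambda>\<omega>. \<Sum>j\<in>J i. indicator (A i j) \<omega> :: real)" for i
  have indicator: "integrable M (indicator (A i j) :: 'a \<Rightarrow> real)"
    "expectation (indicator (A i j)) = prob (A i j)" if "i \<in> I" "j \<in> J i" for i j
    using assms(3)[OF that] emeasure_finite
    by (auto simp: less_top[symmetric] Int_absorb2 sets.sets_into_space)
  have count: "integrable M (count i)" "expectation (count i) = (\<Sum>j\<in>J i. prob (A i j))"
    if "i \<in> I" for i
  proof -
    show "integrable M (count i)"
      unfolding count_def using indicator(1)[OF that] by auto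
    have "expectation (count i) = (\<Sum>j\<in>J i. expectation (indicator (A i j)))"
      unfolding count_def using indicator(1)[OF that] by (rule Bochner_Integration.integral_sum)
    also have "\<dots> = (\<Sum>j\<in>J i. prob (A i j))"
      using indicator(2)[OF that] by (intro sum.cong) auto
    finally show "expectation (count i) = (\<Sum>j\<in>J i. prob (A i j))" .
  qed
  have "(\<Sum>i\<in>I. c i * (\<Sum>j\<in>J i. prob (A i j))) = (\<Sum>i\<in>I. expectation (\<lambda>\<omega>. c i * count i \<omega>))"
    using count by simp
  also have "\<dots> = expectation (\<lambda>\<omega>. \<Sum>i\<in>I. c i * count i \<omega>)"
    using count by (intro Bochner_Integration.integral_sum[symmetric]) auto
  also have "\<dots> \<le> expectation (\<lambda>_. b)"
  proof (rule integral_mono_AE)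
    have "count i \<omega> = real (card {j\<in>J i. \<omega> \<in> A i j})" if "i \<in> I" for i \<omega>
      using assms(2)[OF that] by (simp add: count_def indicator_def Int_def)
    then show "AE \<omega> in M. (\<Sum>i\<in>I. c i * count i \<omega>) \<le> b"
      using assms(4) by (rule_tac eventually_mono) (auto cong: sum.cong)
  qed (use count in auto)
  also have "\<dots> = b" by (simp add: prob_space)
  finally show ?thesis .
qed

text \<open>indep_var compares random variables with values in one common type, so a data point is
  paired with the remaining calibration data as a function on {0}.\<close>
definition at_zero :: "'b \<Rightarrow> nat \<Rightarrow> 'b" where
  "at_zero z = restrict (\<lambda>_. z) {0}"

lemma measurable_at_zero: "at_zero \<in> N \<rightarrow>\<^sub>M PiM {0} (\<lambda>_. N)"
  unfolding at_zero_def by (rule measurable_restrict) auto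

section \<open>The sampling model\<close>

locale gwcp_model = prob_space M
  for M :: "'a measure" +
  fixes M1 :: "'x measure" and MY :: "'y measure" and Pk :: "nat \<Rightarrow> ('x \<times> 'y) measure"
    and q :: "nat \<Rightarrow> real" and \<alpha> :: real and K :: nat and nk :: "nat \<Rightarrow> nat" and n :: nat
    and Z :: "nat \<Rightarrow> 'a \<Rightarrow> (nat \<times> 'x) \<times> 'y" and s :: "(nat \<times> 'x) \<times> 'y \<Rightarrow> real"
  assumes prob_space_Pk: "\<And>k. k \<in> {1..K} \<Longrightarrow> prob_space (Pk k)"
    and sets_Pk: "\<And>k. k \<in> {1..K} \<Longrightarrow> sets (Pk k) = sets (M1 \<Otimes>\<^sub>M MY)"
    and q_nonneg: "\<And>k. k \<in> {1..K} \<Longrightarrow> 0 \<le> q k"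
    and q_sum: "(\<Sum>k=1..K. q k) = 1"
    and alpha_nonneg: "0 \<le> \<alpha>"
    and n_eq: "n = (\<Sum>k=1..K. nk k)"
    and measurable_s: "s \<in> borel_measurable ((count_space UNIV \<Otimes>\<^sub>M M1) \<Otimes>\<^sub>M MY)"
    and indep: "indep_vars (\<lambda>_. (count_space UNIV \<Otimes>\<^sub>M M1) \<Otimes>\<^sub>M MY) Z {1..n+1}"
    and calib: "\<And>k i. k \<in> {1..K} \<Longrightarrow> i \<in> block nk k \<Longrightarrow>
      distr M ((count_space UNIV \<Otimes>\<^sub>M M1) \<Otimes>\<^sub>M MY) (Z i)
        = distr (Pk k) ((count_space UNIV \<Otimes>\<^sub>M M1) \<Otimes>\<^sub>M MY) (\<lambda>(x1, y). ((k, x1), y))"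
    and test: "\<And>k A. k \<in> {1..K} \<Longrightarrow> A \<in> sets (M1 \<Otimes>\<^sub>M MY) \<Longrightarrow>
      prob {\<omega>\<in>space M. label (Z (n+1) \<omega>) = k \<and> (snd (fst (Z (n+1) \<omega>)), snd (Z (n+1) \<omega>)) \<in> A}
        = q k * measure (Pk k) A"
begin

abbreviation Data :: "((nat \<times> 'x) \<times> 'y) measure" where
  "Data \<equiv> (count_space UNIV \<Otimes>\<^sub>M M1) \<Otimes>\<^sub>M MY"

definition test_label :: "nat \<Rightarrow> 'a set" where
  "test_label k = {\<omega>\<in>space M. label (Z (n+1) \<omega>) = k}"

definition miss :: "'a set" where
  "miss = {\<omega>\<in>space M. snd (Z (n+1) \<omega>) \<notin> gwcp_set K q \<alpha> s n (\<lambda>i. Z i \<omega>) (fst (Z (n+1) \<omega>))}"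

definition small_tail :: "nat \<Rightarrow> nat \<Rightarrow> 'a set" where
  "small_tail k i = {\<omega>\<in>space M. label (Z i \<omega>) = k \<and> mix_tail K q s n (\<lambda>l. Z l \<omega>) (s (Z i \<omega>)) \<le> \<alpha>}"

definition empty_mass :: real where
  "empty_mass = (\<Sum>j\<in>{j\<in>{1..K}. nk j = 0}. q j)"

definition others :: "nat \<Rightarrow> 'a \<Rightarrow> nat \<Rightarrow> (nat \<times> 'x) \<times> 'y" where
  "others i \<omega> = restrict (\<lambda>l. Z l \<omega>) ({1..n} - {i})"

definition swapped_small_tail ::
  "nat \<Rightarrow> nat \<Rightarrow> ((nat \<Rightarrow> (nat \<times> 'x) \<times> 'y) \<times> (nat \<Rightarrow> (nat \<times> 'x) \<times> 'y)) set" where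
  "swapped_small_tail k i = {p \<in> space (PiM ({1..n} - {i}) (\<lambda>_. Data) \<Otimes>\<^sub>M PiM {0} (\<lambda>_. Data)).
     label (snd p 0) = k \<and> mix_tail K q s n ((fst p)(i := snd p 0)) (s (snd p 0)) \<le> \<alpha>}"

lemma measurable_Z: "l \<in> {1..n+1} \<Longrightarrow> Z l \<in> M \<rightarrow>\<^sub>M Data"
  using indep by (auto simp: indep_vars_def)

lemma measurable_Z_test [measurable]: "Z (n+1) \<in> M \<rightarrow>\<^sub>M Data"
  using measurable_Z by simp

lemma measurable_label_test: "(\<lambda>\<omega>. label (Z (n+1) \<omega>)) \<in> M \<rightarrow>\<^sub>M count_space UNIV"
  by measurable

lemma block_subset_calib: "k \<in> {1..K} \<Longrightarrow> block nk k \<subseteq> {1..n}"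
  using block_subset n_eq by blast

lemma sets_test_label: "test_label k \<in> events"
  unfolding test_label_def by measurable

lemma sets_small_tail:
  assumes "i \<in> {1..n}"
  shows "small_tail k i \<in> events"
proof -
  have Zi [measurable]: "Z i \<in> M \<rightarrow>\<^sub>M Data" using assms measurable_Z by auto
  have [measurable]: "(\<lambda>\<omega>. mix_tail K q s n (\<lambda>l. Z l \<omega>) (s (Z i \<omega>))) \<in> borel_measurable M"
    using measurable_Z measurable_s measurable_compose[OF Zi measurable_s]
    by (intro borel_measurable_mix_tail[where MX=M1 and MY=MY]) auto
  show ?thesis unfolding small_tail_def by measurable
qed

lemma miss_iff:
  "\<omega> \<in> miss \<longleftrightarrow> \<omega> \<in> space M \<and> 0 \<le> gwcp_level q \<alpha> n (\<lambda>l. Z l \<omega>) (label (Z (n+1) \<omega>))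
     \<and> mix_tail K q s n (\<lambda>l. Z l \<omega>) (s (Z (n+1) \<omega>)) \<le> gwcp_level q \<alpha> n (\<lambda>l. Z l \<omega>) (label (Z (n+1) \<omega>))"
proof -
  have "gwcp_qhat K q \<alpha> s n (\<lambda>l. Z l \<omega>) (label (Z (n+1) \<omega>)) < ereal (s (Z (n+1) \<omega>)) \<longleftrightarrow>
     0 \<le> gwcp_level q \<alpha> n (\<lambda>l. Z l \<omega>) (label (Z (n+1) \<omega>))
     \<and> mix_tail K q s n (\<lambda>l. Z l \<omega>) (s (Z (n+1) \<omega>)) \<le> gwcp_level q \<alpha> n (\<lambda>l. Z l \<omega>) (label (Z (n+1) \<omega>))"
    by (rule gwcp_qhat_less_iff[of K q, OF q_nonneg q_sum])
  then show ?thesis unfolding miss_def gwcp_set_def by (auto simp: not_le)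
qed

lemma sets_miss: "miss \<in> events"
proof -
  have Z_calib: "(\<lambda>\<omega>. Z l \<omega>) \<in> M \<rightarrow>\<^sub>M Data" if "l \<in> {1..n}" for l
    using measurable_Z that by auto
  have [measurable]: "(\<lambda>\<omega>. gwcp_level q \<alpha> n (\<lambda>l. Z l \<omega>) (label (Z (n+1) \<omega>))) \<in> borel_measurable M"
  proof (rule measurable_compose_countable[where f="\<lambda>k \<omega>. gwcp_level q \<alpha> n (\<lambda>l. Z l \<omega>) k"])
    show "(\<lambda>\<omega>. gwcp_level q \<alpha> n (\<lambda>l. Z l \<omega>) k) \<in> borel_measurable M" for k
      by (intro borel_measurable_gwcp_level[where MX=M1 and MY=MY] Z_calib)
  qed (rule measurable_label_test)
  have [measurable]: "(\<lambda>\<omega>. mix_tail K q s n (\<lambda>l. Z l \<omega>) (s (Z (n+1) \<omega>))) \<in> borel_measurable M"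
    using Z_calib measurable_s measurable_compose[OF measurable_Z_test measurable_s]
    by (intro borel_measurable_mix_tail[where MX=M1 and MY=MY]) auto
  have "miss = {\<omega>\<in>space M. 0 \<le> gwcp_level q \<alpha> n (\<lambda>l. Z l \<omega>) (label (Z (n+1) \<omega>))
     \<and> mix_tail K q s n (\<lambda>l. Z l \<omega>) (s (Z (n+1) \<omega>)) \<le> gwcp_level q \<alpha> n (\<lambda>l. Z l \<omega>) (label (Z (n+1) \<omega>))}"
    using miss_iff by blast
  also have "\<dots> \<in> events" by measurable
  finally show ?thesis .
qed

lemma measurable_tag:
  assumes "k \<in> {1..K}"
  shows "(\<lambda>(x1, y). ((k, x1), y)) \<in> Pk k \<rightarrow>\<^sub>M Data"
proof -
  have "(\<lambda>(x1, y). ((k, x1), y)) \<in> M1 \<Otimes>\<^sub>M MY \<rightarrow>\<^sub>M Data" by measurable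
  then show ?thesis by (simp add: measurable_cong_sets[OF sets_Pk[OF assms] refl])
qed

lemma measurable_Z_calib:
  assumes "k \<in> {1..K}" "i \<in> block nk k"
  shows "Z i \<in> M \<rightarrow>\<^sub>M Data"
  using assms block_subset_calib[OF assms(1)] by (intro measurable_Z) auto

lemma AE_calib_label:
  assumes "k \<in> {1..K}" "i \<in> block nk k"
  shows "AE \<omega> in M. label (Z i \<omega>) = k"
proof -
  have label_k: "{z \<in> space Data. label z = k} \<in> sets Data" by measurable
  have "AE x in Pk k. label ((\<lambda>(x1, y). ((k, x1), y)) x) = k"
    by (auto split: prod.split)
  then have "AE z in distr M Data (Z i). label z = k"
    unfolding calib[OF assms] using AE_distr_iff[OF measurable_tag[OF assms(1)] label_k] by blast
  then show ?thesis
    using AE_distr_iff[OF measurable_Z_calib[OF assms] label_k] by blast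
qed

lemma AE_gwcp_group_eq_block: "AE \<omega> in M. \<forall>j\<in>{1..K}. gwcp_group n (\<lambda>i. Z i \<omega>) j = block nk j"
proof -
  have "AE \<omega> in M. \<forall>k\<in>{1..K}. \<forall>i\<in>block nk k. label (Z i \<omega>) = k"
    by (intro AE_finite_allI) (auto simp: block_def intro: AE_calib_label)
  then show ?thesis
  proof (rule eventually_mono)
    fix \<omega> assume "\<forall>k\<in>{1..K}. \<forall>i\<in>block nk k. label (Z i \<omega>) = k"
    then show "\<forall>j\<in>{1..K}. gwcp_group n (\<lambda>i. Z i \<omega>) j = block nk j"
      using gwcp_group_eq_block[OF n_eq, where D="\<lambda>i. Z i \<omega>"] by blast
  qed
qed

lemma prob_test_label:
  assumes "k \<in> {1..K}"
  shows "prob (test_label k) = q k"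
proof -
  have "test_label k = {\<omega>\<in>space M. label (Z (n+1) \<omega>) = k
      \<and> (snd (fst (Z (n+1) \<omega>)), snd (Z (n+1) \<omega>)) \<in> space (M1 \<Otimes>\<^sub>M MY)}"
    using measurable_space[OF measurable_Z_test]
    by (force simp: test_label_def space_pair_measure mem_Times_iff)
  then have "prob (test_label k) = q k * measure (Pk k) (space (M1 \<Otimes>\<^sub>M MY))"
    using test[OF assms sets.top] by simp
  also have "measure (Pk k) (space (M1 \<Otimes>\<^sub>M MY)) = 1"
    using prob_space.prob_space[OF prob_space_Pk[OF assms]] sets_eq_imp_space_eq[OF sets_Pk[OF assms]]
    by simp
  finally show ?thesis by simp
qed

lemma AE_test_label: "AE \<omega> in M. label (Z (n+1) \<omega>) \<in> {1..K}"
proof -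
  have "prob (\<Union>k\<in>{1..K}. test_label k) = (\<Sum>k=1..K. prob (test_label k))"
    using sets_test_label
    by (intro finite_measure_finite_Union) (auto simp: disjoint_family_on_def test_label_def)
  also have "\<dots> = 1"
    using q_sum by (simp add: prob_test_label)
  finally have "AE \<omega> in M. \<omega> \<in> (\<Union>k\<in>{1..K}. test_label k)" by (rule AE_prob_1)
  then show ?thesis by (rule eventually_mono) (auto simp: test_label_def)
qed

lemma prob_test_eq_scaled_calib:
  assumes "k \<in> {1..K}" "i \<in> block nk k" "B \<in> sets Data" "B \<subseteq> {z. label z = k}"
  shows "prob (Z (n+1) -` B \<inter> space M) = q k * prob (Z i -` B \<inter> space M)"
proof -
  let ?tag = "\<lambda>(x1, y). ((k, x1), y)"
  define A where "A = ?tag -` B \<inter> space (M1 \<Otimes>\<^sub>M MY)"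
  have A: "A \<in> sets (M1 \<Otimes>\<^sub>M MY)"
    using measurable_sets[OF measurable_tag[OF assms(1)] assms(3)] sets_Pk[OF assms(1)]
      sets_eq_imp_space_eq[OF sets_Pk[OF assms(1)]] by (simp add: A_def)
  have "Z (n+1) -` B \<inter> space M = {\<omega>\<in>space M. label (Z (n+1) \<omega>) = k
      \<and> (snd (fst (Z (n+1) \<omega>)), snd (Z (n+1) \<omega>)) \<in> A}"
    using assms(4) measurable_space[OF measurable_Z_test]
    by (fastforce simp: A_def space_pair_measure)
  then have "prob (Z (n+1) -` B \<inter> space M) = q k * measure (Pk k) A"
    using test[OF assms(1) A] by simp
  moreover have "prob (Z i -` B \<inter> space M) = measure (Pk k) A"
  proof -
    have "prob (Z i -` B \<inter> space M) = measure (distr M Data (Z i)) B"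
      by (rule measure_distr[symmetric, OF measurable_Z_calib[OF assms(1,2)] assms(3)])
    also have "\<dots> = measure (Pk k) (?tag -` B \<inter> space (Pk k))"
      unfolding calib[OF assms(1,2)] by (rule measure_distr[OF measurable_tag[OF assms(1)] assms(3)])
    also have "\<dots> = measure (Pk k) A"
      using sets_eq_imp_space_eq[OF sets_Pk[OF assms(1)]] by (simp add: A_def)
    finally show ?thesis .
  qed
  ultimately show ?thesis by simp
qed

lemma indep_var_others:
  assumes "i \<in> {1..n}" "l \<in> {i, n+1}"
  shows "indep_var (PiM ({1..n} - {i}) (\<lambda>_. Data)) (others i)
    (PiM {0} (\<lambda>_. Data)) (\<lambda>\<omega>. at_zero (Z l \<omega>))"
proof -
  have "indep_var (PiM ({1..n} - {i}) (\<lambda>_. Data)) (others i)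
      (PiM {l} (\<lambda>_. Data)) (\<lambda>\<omega>. restrict (\<lambda>j. Z j \<omega>) {l})"
    unfolding others_def using assms by (intro indep_var_restrict[OF indep]) auto
  moreover have "(\<lambda>f. at_zero (f l)) \<in> PiM {l} (\<lambda>_. Data) \<rightarrow>\<^sub>M PiM {0} (\<lambda>_. Data)"
    by (rule measurable_compose[OF measurable_component_singleton measurable_at_zero]) simp
  ultimately have "indep_var (PiM ({1..n} - {i}) (\<lambda>_. Data)) (id \<circ> others i)
      (PiM {0} (\<lambda>_. Data)) ((\<lambda>f. at_zero (f l)) \<circ> (\<lambda>\<omega>. restrict (\<lambda>j. Z j \<omega>) {l}))"
    by (intro indep_var_compose) auto
  then show ?thesis by (simp add: comp_def)
qed

lemma mix_tail_others_fun_upd: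
  "mix_tail K q s n ((others i \<omega>)(i := z)) t = mix_tail K q s n ((\<lambda>l. Z l \<omega>)(i := z)) t"
  by (rule mix_tail_cong) (simp add: others_def)

lemma measurable_others [measurable]: "others i \<in> M \<rightarrow>\<^sub>M PiM ({1..n} - {i}) (\<lambda>_. Data)"
  unfolding others_def by (rule measurable_restrict) (auto intro: measurable_Z)

lemma measurable_at_zero_Z: "l \<in> {1..n+1} \<Longrightarrow> (\<lambda>\<omega>. at_zero (Z l \<omega>)) \<in> M \<rightarrow>\<^sub>M PiM {0} (\<lambda>_. Data)"
  by (rule measurable_compose[OF measurable_Z measurable_at_zero])

lemma sets_swapped_small_tail:
  "swapped_small_tail k i \<in> sets (PiM ({1..n} - {i}) (\<lambda>_. Data) \<Otimes>\<^sub>M PiM {0} (\<lambda>_. Data))"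
proof -
  let ?MV = "PiM ({1..n} - {i}) (\<lambda>_. Data)" and ?N0 = "PiM {0::nat} (\<lambda>_. Data)"
  have "(\<lambda>p. ((fst p)(i := snd p 0)) l) \<in> ?MV \<Otimes>\<^sub>M ?N0 \<rightarrow>\<^sub>M Data" if "l \<in> {1..n}" for l
    using that by (cases "l = i") auto
  then have [measurable]: "(\<lambda>p. mix_tail K q s n ((fst p)(i := snd p 0)) (s (snd p 0)))
      \<in> borel_measurable (?MV \<Otimes>\<^sub>M ?N0)"
    using measurable_s by (intro borel_measurable_mix_tail[where MX=M1 and MY=MY]) auto
  show ?thesis unfolding swapped_small_tail_def by measurable
qed

lemma swapped_small_tail_calib_iff:
  assumes "\<omega> \<in> space M" "i \<in> {1..n}"
  shows "(others i \<omega>, at_zero (Z i \<omega>)) \<in> swapped_small_tail k i \<longleftrightarrow> \<omega> \<in> small_tail k i"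
  using assms measurable_space[OF measurable_others assms(1)]
    measurable_space[OF measurable_at_zero_Z assms(1)] fun_upd_triv[of "\<lambda>l. Z l \<omega>" i]
  by (auto simp: swapped_small_tail_def small_tail_def space_pair_measure mix_tail_others_fun_upd
      at_zero_def)

lemma AE_miss_test_label_swapped:
  assumes k: "k \<in> {1..K}" and i: "i \<in> block nk k"
  shows "AE \<omega> in M. \<omega> \<in> miss \<inter> test_label k \<longrightarrow>
    (others i \<omega>, at_zero (Z (n+1) \<omega>)) \<in> swapped_small_tail k i"
  using AE_gwcp_group_eq_block
proof (rule eventually_mono)
  fix \<omega> assume groups: "\<forall>j\<in>{1..K}. gwcp_group n (\<lambda>l. Z l \<omega>) j = block nk j"
  show "\<omega> \<in> miss \<inter> test_label k \<longrightarrow> (others i \<omega>, at_zero (Z (n+1) \<omega>)) \<in> swapped_small_tail k i"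
  proof
    assume "\<omega> \<in> miss \<inter> test_label k"
    then have "\<omega> \<in> space M" "label (Z (n+1) \<omega>) = k"
      and "mix_tail K q s n (\<lambda>l. Z l \<omega>) (s (Z (n+1) \<omega>)) \<le> gwcp_level q \<alpha> n (\<lambda>l. Z l \<omega>) k"
      by (auto simp: miss_iff test_label_def)
    moreover have "i \<in> gwcp_group n (\<lambda>l. Z l \<omega>) k" using groups k i by simp
    ultimately have "mix_tail K q s n ((\<lambda>l. Z l \<omega>)(i := Z (n+1) \<omega>)) (s (Z (n+1) \<omega>)) \<le> \<alpha>"
      using mix_tail_fun_upd_le[of k K q] k q_nonneg by blast
    then show "(others i \<omega>, at_zero (Z (n+1) \<omega>)) \<in> swapped_small_tail k i"
      using \<open>\<omega> \<in> space M\<close> \<open>label (Z (n+1) \<omega>) = k\<close> measurable_space[OF measurable_others]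
        measurable_space[OF measurable_at_zero_Z]
      by (auto simp: swapped_small_tail_def space_pair_measure mix_tail_others_fun_upd at_zero_def)
  qed
qed

text \<open>The exchange step: the other calibration data are independent of both the test point and
  the calibration point i, and on label k the law of the former is q k times that of the latter.\<close>
lemma prob_swapped_small_tail:
  assumes k: "k \<in> {1..K}" and i: "i \<in> block nk k"
  shows "prob ((\<lambda>\<omega>. (others i \<omega>, at_zero (Z (n+1) \<omega>))) -` swapped_small_tail k i \<inter> space M)
    = q k * prob ((\<lambda>\<omega>. (others i \<omega>, at_zero (Z i \<omega>))) -` swapped_small_tail k i \<inter> space M)"
proof -
  have "i \<in> {1..n}" using block_subset_calib[OF k] i by blast
  have indep_test: "indep_var (PiM ({1..n} - {i}) (\<lambda>_. Data)) (others i)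
      (PiM {0} (\<lambda>_. Data)) (\<lambda>\<omega>. at_zero (Z (n+1) \<omega>))"
    by (rule indep_var_others) (use \<open>i \<in> {1..n}\<close> in simp_all)
  have indep_calib: "indep_var (PiM ({1..n} - {i}) (\<lambda>_. Data)) (others i)
      (PiM {0} (\<lambda>_. Data)) (\<lambda>\<omega>. at_zero (Z i \<omega>))"
    by (rule indep_var_others) (use \<open>i \<in> {1..n}\<close> in simp_all)
  show ?thesis
  proof (rule prob_pair_indep_var_scaled[where P="\<lambda>f. label (f 0) = k",
        OF indep_test indep_calib q_nonneg[OF k] sets_swapped_small_tail])
    show "swapped_small_tail k i \<subseteq> {p. label (snd p 0) = k}"
      by (auto simp: swapped_small_tail_def)
  next
    fix B assume B: "B \<in> sets (PiM {0::nat} (\<lambda>_. Data))" "B \<subseteq> {f. label (f 0) = k}"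
    define B' where "B' = at_zero -` B \<inter> space Data"
    have "B' \<in> sets Data" unfolding B'_def using measurable_sets[OF measurable_at_zero B(1)] .
    moreover have "B' \<subseteq> {z. label z = k}" using B(2) by (auto simp: B'_def at_zero_def)
    ultimately have "prob (Z (n+1) -` B' \<inter> space M) = q k * prob (Z i -` B' \<inter> space M)"
      by (rule prob_test_eq_scaled_calib[OF k i])
    moreover have "(\<lambda>\<omega>. at_zero (Z l \<omega>)) -` B \<inter> space M = Z l -` B' \<inter> space M"
      if "l \<in> {1..n+1}" for l
      using measurable_space[OF measurable_Z[OF that]] by (auto simp: B'_def)
    ultimately show "prob ((\<lambda>\<omega>. at_zero (Z (n+1) \<omega>)) -` B \<inter> space M)
        = q k * prob ((\<lambda>\<omega>. at_zero (Z i \<omega>)) -` B \<inter> space M)"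
      using \<open>i \<in> {1..n}\<close> by auto
  qed
qed

lemma prob_miss_test_label_le:
  assumes k: "k \<in> {1..K}" and i: "i \<in> block nk k"
  shows "prob (miss \<inter> test_label k) \<le> q k * prob (small_tail k i)"
proof -
  have "i \<in> {1..n}" using block_subset_calib[OF k] i by blast
  let ?test = "\<lambda>\<omega>. (others i \<omega>, at_zero (Z (n+1) \<omega>))"
    and ?calib = "\<lambda>\<omega>. (others i \<omega>, at_zero (Z i \<omega>))"
  have [measurable]: "(\<lambda>\<omega>. at_zero (Z (n+1) \<omega>)) \<in> M \<rightarrow>\<^sub>M PiM {0} (\<lambda>_. Data)"
    by (rule measurable_at_zero_Z) simp
  have "AE \<omega> in M. \<omega> \<in> miss \<inter> test_label k \<longrightarrow> \<omega> \<in> ?test -` swapped_small_tail k i \<inter> space M"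
    using AE_space AE_miss_test_label_swapped[OF k i] by eventually_elim auto
  then have "prob (miss \<inter> test_label k) \<le> prob (?test -` swapped_small_tail k i \<inter> space M)"
    by (rule finite_measure_mono_AE) (rule measurable_sets[OF _ sets_swapped_small_tail], measurable)
  also have "\<dots> = q k * prob (?calib -` swapped_small_tail k i \<inter> space M)"
    by (rule prob_swapped_small_tail[OF k i])
  also have "?calib -` swapped_small_tail k i \<inter> space M = small_tail k i"
    using swapped_small_tail_calib_iff[OF _ \<open>i \<in> {1..n}\<close>] by (auto simp: small_tail_def)
  finally show ?thesis .
qed

lemma AE_empty_group_mass:
  "AE \<omega> in M. empty_group_mass K q n (\<lambda>l. Z l \<omega>) = empty_mass"
  using AE_gwcp_group_eq_block
proof (rule eventually_mono)
  fix \<omega> assume "\<forall>j\<in>{1..K}. gwcp_group n (\<lambda>i. Z i \<omega>) j = block nk j"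
  then have "card (gwcp_group n (\<lambda>l. Z l \<omega>) j) = nk j" if "j \<in> {1..K}" for j
    using that by (simp add: card_block)
  then have "{j\<in>{1..K}. card (gwcp_group n (\<lambda>l. Z l \<omega>) j) = 0} = {j\<in>{1..K}. nk j = 0}"
    by (intro Collect_cong conj_cong refl) simp_all
  then show "empty_group_mass K q n (\<lambda>l. Z l \<omega>) = empty_mass"
    by (simp add: empty_group_mass_def empty_mass_def)
qed

lemma prob_miss_test_label_empty:
  assumes k: "k \<in> {1..K}" and "nk k = 0"
  shows "prob (miss \<inter> test_label k) \<le> (if empty_mass \<le> \<alpha> then q k else 0)"
proof (cases "empty_mass \<le> \<alpha>")
  case True
  have "prob (miss \<inter> test_label k) \<le> prob (test_label k)"
    using sets_test_label by (intro finite_measure_mono) auto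
  with True show ?thesis by (simp add: prob_test_label[OF k])
next
  case False
  have "AE \<omega> in M. \<omega> \<in> miss \<inter> test_label k \<longrightarrow> \<omega> \<in> {}"
    using AE_gwcp_group_eq_block AE_empty_group_mass
  proof eventually_elim
    case (elim \<omega>)
    show ?case
    proof
      assume "\<omega> \<in> miss \<inter> test_label k"
      then have "mix_tail K q s n (\<lambda>l. Z l \<omega>) (s (Z (n+1) \<omega>)) \<le> gwcp_level q \<alpha> n (\<lambda>l. Z l \<omega>) k"
        by (auto simp: miss_iff test_label_def)
      moreover have "gwcp_level q \<alpha> n (\<lambda>l. Z l \<omega>) k = \<alpha>"
        using elim k \<open>nk k = 0\<close> by (simp add: gwcp_level_def card_block)
      moreover have "empty_group_mass K q n (\<lambda>l. Z l \<omega>) \<le> mix_tail K q s n (\<lambda>l. Z l \<omega>) (s (Z (n+1) \<omega>))"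
        by (rule empty_group_mass_le_mix_tail[of K q, OF q_nonneg])
      ultimately have "empty_mass \<le> \<alpha>" using elim(2) by simp
      with False show "\<omega> \<in> {}" by simp
    qed
  qed
  then have "prob (miss \<inter> test_label k) \<le> prob {}"
    by (rule finite_measure_mono_AE) simp
  with False show ?thesis by simp
qed

lemma prob_miss_test_label_nonempty:
  assumes k: "k \<in> {1..K}" and "0 < nk k"
  shows "prob (miss \<inter> test_label k) \<le> q k / real (nk k) * (\<Sum>i\<in>block nk k. prob (small_tail k i))"
proof -
  have "real (nk k) * prob (miss \<inter> test_label k) = (\<Sum>i\<in>block nk k. prob (miss \<inter> test_label k))"
    using k by (simp add: card_block)
  also have "\<dots> \<le> (\<Sum>i\<in>block nk k. q k * prob (small_tail k i))"
    using k by (intro sum_mono prob_miss_test_label_le) auto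
  finally have "prob (miss \<inter> test_label k) * real (nk k) \<le> q k * (\<Sum>i\<in>block nk k. prob (small_tail k i))"
    by (simp add: sum_distrib_left mult.commute)
  then show ?thesis
    using \<open>0 < nk k\<close> by (simp add: pos_le_divide_eq)
qed

lemma sum_prob_small_tail_le:
  "(\<Sum>k\<in>{k\<in>{1..K}. 0 < nk k}. q k / real (nk k) * (\<Sum>i\<in>block nk k. prob (small_tail k i)))
    \<le> \<alpha> - (if empty_mass \<le> \<alpha> then empty_mass else 0)"
proof (rule sum_prob_le_of_AE_count_le)
  show "small_tail k i \<in> events" if "k \<in> {k\<in>{1..K}. 0 < nk k}" "i \<in> block nk k" for k i
    using that block_subset_calib[of k] by (intro sets_small_tail) auto
  show "AE \<omega> in M. (\<Sum>k\<in>{k\<in>{1..K}. 0 < nk k}. q k / real (nk k) * real (card {i\<in>block nk k. \<omega> \<in> small_tail k i}))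
      \<le> \<alpha> - (if empty_mass \<le> \<alpha> then empty_mass else 0)"
    using AE_space AE_gwcp_group_eq_block AE_empty_group_mass
  proof eventually_elim
    case (elim \<omega>)
    let ?G = "gwcp_group n (\<lambda>l. Z l \<omega>)"
    have "{i\<in>block nk k. \<omega> \<in> small_tail k i} = {i\<in>?G k. mix_tail K q s n (\<lambda>l. Z l \<omega>) (s (Z i \<omega>)) \<le> \<alpha>}"
      if "k \<in> {1..K}" for k
    proof -
      have "{i\<in>block nk k. \<omega> \<in> small_tail k i} = {i\<in>?G k. \<omega> \<in> small_tail k i}"
        using elim(2) that by simp
      also have "\<dots> = {i\<in>?G k. mix_tail K q s n (\<lambda>l. Z l \<omega>) (s (Z i \<omega>)) \<le> \<alpha>}"
        using elim(1) by (auto simp: small_tail_def gwcp_group_def)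
      finally show ?thesis .
    qed
    moreover have "nk k = card (?G k)" if "k \<in> {1..K}" for k
      using that elim(2) by (simp add: card_block)
    ultimately have "(\<Sum>k\<in>{k\<in>{1..K}. 0 < nk k}. q k / real (nk k) * real (card {i\<in>block nk k. \<omega> \<in> small_tail k i}))
        = (\<Sum>j\<in>{j\<in>{1..K}. card (?G j) > 0}. q j / real (card (?G j))
            * real (card {i\<in>?G j. mix_tail K q s n (\<lambda>l. Z l \<omega>) (s (Z i \<omega>)) \<le> \<alpha>}))"
      by (intro sum.cong) auto
    also have "\<dots> \<le> \<alpha> - (if empty_mass \<le> \<alpha> then empty_mass else 0)"
      using sum_card_small_mix_tail_le[of K q \<alpha> n "\<lambda>l. Z l \<omega>" s, OF q_nonneg alpha_nonneg]
      unfolding elim(3) by linarith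
    finally show ?case .
  qed
qed auto

lemma prob_miss_le: "prob miss \<le> \<alpha>"
proof -
  let ?Kp = "{k\<in>{1..K}. 0 < nk k}" and ?K0 = "{k\<in>{1..K}. nk k = 0}"
  have "AE \<omega> in M. \<omega> \<in> miss \<longrightarrow> \<omega> \<in> (\<Union>k\<in>{1..K}. miss \<inter> test_label k)"
    using AE_test_label by (rule eventually_mono) (auto simp: test_label_def miss_def)
  then have "prob miss \<le> prob (\<Union>k\<in>{1..K}. miss \<inter> test_label k)"
    using sets_miss sets_test_label by (intro finite_measure_mono_AE) auto
  also have "\<dots> \<le> (\<Sum>k\<in>{1..K}. prob (miss \<inter> test_label k))"
    using sets_miss sets_test_label by (intro measure_UNION_le) auto
  also have "\<dots> = (\<Sum>k\<in>?Kp. prob (miss \<inter> test_label k)) + (\<Sum>k\<in>?K0. prob (miss \<inter> test_label k))"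
    by (subst sum.union_disjoint[symmetric]) (auto intro!: sum.cong)
  also have "\<dots> \<le> (\<Sum>k\<in>?Kp. q k / real (nk k) * (\<Sum>i\<in>block nk k. prob (small_tail k i)))
      + (\<Sum>k\<in>?K0. if empty_mass \<le> \<alpha> then q k else 0)"
    by (intro add_mono sum_mono prob_miss_test_label_nonempty prob_miss_test_label_empty) auto
  also have "(\<Sum>k\<in>?K0. if empty_mass \<le> \<alpha> then q k else 0) = (if empty_mass \<le> \<alpha> then empty_mass else 0)"
    by (simp add: empty_mass_def)
  finally show ?thesis using sum_prob_small_tail_le by linarith
qed

theorem coverage:
  "1 - \<alpha> \<le> measure M {\<omega>\<in>space M. snd (Z (n+1) \<omega>) \<in> gwcp_set K q \<alpha> s n (\<lambda>i. Z i \<omega>) (fst (Z (n+1) \<omega>))}"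
proof -
  have "{\<omega>\<in>space M. snd (Z (n+1) \<omega>) \<in> gwcp_set K q \<alpha> s n (\<lambda>i. Z i \<omega>) (fst (Z (n+1) \<omega>))} = space M - miss"
    by (auto simp: miss_def)
  then show ?thesis using prob_compl[OF sets_miss] prob_miss_le by simp
qed

end

theorem theorem3:
  fixes M :: "'a measure" and M1 :: "'x measure" and MY :: "'y measure"
    and Pk :: "nat \<Rightarrow> ('x \<times> 'y) measure"
    and q :: "nat \<Rightarrow> real" and \<alpha> :: real and K :: nat
    and nk :: "nat \<Rightarrow> nat" and n :: nat
    and Z :: "nat \<Rightarrow> 'a \<Rightarrow> (nat \<times> 'x) \<times> 'y"
    and s :: "(nat \<times> 'x) \<times> 'y \<Rightarrow> real"
  assumes K: "K \<ge> 1"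
    and M: "prob_space M"
    and Pi: "\<forall>k\<in>{1..K}. prob_space (Pk k) \<and> sets (Pk k) = sets (M1 \<Otimes>\<^sub>M MY)"
    and q_nonneg: "\<forall>k\<in>{1..K}. q k \<ge> 0"
    and q_sum: "(\<Sum>k=1..K. q k) = 1"
    and alpha: "0 < \<alpha>" "\<alpha> < 1"
    and n: "n = (\<Sum>k=1..K. nk k)"
    and s_meas: "s \<in> borel_measurable ((count_space UNIV \<Otimes>\<^sub>M M1) \<Otimes>\<^sub>M MY)"
    and indep: "prob_space.indep_vars M (\<lambda>_. (count_space UNIV \<Otimes>\<^sub>M M1) \<Otimes>\<^sub>M MY) Z {1..n+1}"
    and calib: "\<forall>k\<in>{1..K}. \<forall>i\<in>{(\<Sum>j=1..<k. nk j) + 1 .. (\<Sum>j=1..k. nk j)}.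
        distr M ((count_space UNIV \<Otimes>\<^sub>M M1) \<Otimes>\<^sub>M MY) (Z i)
          = distr (Pk k) ((count_space UNIV \<Otimes>\<^sub>M M1) \<Otimes>\<^sub>M MY) (\<lambda>(x1, y). ((k, x1), y))"
    and test: "\<forall>k\<in>{1..K}. \<forall>A\<in>sets (M1 \<Otimes>\<^sub>M MY).
        measure M {\<omega>\<in>space M. fst (fst (Z (n+1) \<omega>)) = k
                      \<and> (snd (fst (Z (n+1) \<omega>)), snd (Z (n+1) \<omega>)) \<in> A}
          = q k * measure (Pk k) A"
  shows "measure M {\<omega>\<in>space M.
           snd (Z (n+1) \<omega>) \<in> gwcp_set K q \<alpha> s n (\<lambda>i. Z i \<omega>) (fst (Z (n+1) \<omega>))} \<ge> 1 - \<alpha>"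
proof -
  have "gwcp_model M M1 MY Pk q \<alpha> K nk n Z s"
  proof (intro gwcp_model.intro gwcp_model_axioms.intro)
    show "prob_space M" "n = (\<Sum>k=1..K. nk k)" "(\<Sum>k=1..K. q k) = 1" "0 \<le> \<alpha>"
      "s \<in> borel_measurable ((count_space UNIV \<Otimes>\<^sub>M M1) \<Otimes>\<^sub>M MY)"
      "prob_space.indep_vars M (\<lambda>_. (count_space UNIV \<Otimes>\<^sub>M M1) \<Otimes>\<^sub>M MY) Z {1..n+1}"
      using M n q_sum alpha s_meas indep by simp_all
    show "prob_space (Pk k)" "sets (Pk k) = sets (M1 \<Otimes>\<^sub>M MY)" "0 \<le> q k" if "k \<in> {1..K}" for k
      using Pi q_nonneg that by simp_all
    show "distr M ((count_space UNIV \<Otimes>\<^sub>M M1) \<Otimes>\<^sub>M MY) (Z i)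
        = distr (Pk k) ((count_space UNIV \<Otimes>\<^sub>M M1) \<Otimes>\<^sub>M MY) (\<lambda>(x1, y). ((k, x1), y))"
      if "k \<in> {1..K}" "i \<in> block nk k" for k i
      using calib that unfolding block_def by blast
    show "measure M {\<omega>\<in>space M. label (Z (n+1) \<omega>) = k \<and> (snd (fst (Z (n+1) \<omega>)), snd (Z (n+1) \<omega>)) \<in> A}
        = q k * measure (Pk k) A" if "k \<in> {1..K}" "A \<in> sets (M1 \<Otimes>\<^sub>M MY)" for k A
      using test that by blast
  qed
  then show ?thesis by (rule gwcp_model.coverage)
qed

end
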